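(* Let $X\subseteq A^{\mathbb{N}}$ be a (one-sided) sofic shift over a finite alphabet $A$. Then the winning shift $W(X)\subseteq\{0,\dots,|A|-1\}^{\mathbb{N}}$ is weakly $1$-codable; if moreover $X$ is countable, then $W(X)$ is $1$-codable.
   Context: A sofic shift is the set of labels of right-infinite paths in a finite edge-labeled graph. Winning shift: for $X\subseteq A^{\mathbb{N}}$ and a choice sequence $\alpha=\alpha_0\alpha_1\cdots\in\{0,\dots,|A|-1\}^{\mathbb{N}}$, Alice and Bob play infinitely many rounds; in round $j$ Alice chooses $A_j\subseteq A$ with $|A_j|=\alpha_j+1$ and Bob chooses $a_j\in A_j$; Alice wins if $a_0a_1\cdots\in X$. $W(X)$ is the set of $\alpha$ for which Alice has a winning strategy. The ANS with language $0^*$ and radix order has $\mathrm{rep}(n)=0^n$; tuples are represented by left-padding with a new symbol $\#$; $Y\subseteq\mathbb{N}^d$ is $1$-recognizable if $\mathrm{rep}(Y)$ is regular. For $\mathbf{y}\in\mathbb{N}^{\mathbb{N}}$: $\sum\mathbf{y}=\sum_iy_i$; if finite, $\nu(\mathbf{y})$ is the unique nondecreasing tuple $(n_1,\dots,n_d)$ with $y_j=|\{k:n_k=j\}|$. The coding dimension of $Y\subseteq\mathbb{N}^{\mathbb{N}}$ is the least $d$ bounding $\sum\mathbf{y}$ on $Y$, if it exists. $Y$ is weakly $1$-codable if for each $k$ the set $\{\nu(\mathbf{y}):\mathbf{y}\in Y,\sum\mathbf{y}\le k\}$ is $1$-recognizable in each dimension, and $1$-codable if moreover its coding dimension is finite (here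 $W(X)$ is viewed with zero symbol $0$). *)

theory Defs
  imports Main "HOL-Library.Countable_Set"
begin

definition sofic :: "(nat \<Rightarrow> 'a) set \<Rightarrow> bool" where
  "sofic X \<longleftrightarrow> (\<exists>E :: (nat \<times> 'a \<times> nat) set. finite E \<and>
      X = {x. \<exists>p :: nat \<Rightarrow> nat. \<forall>i. (p i, x i, p (Suc i)) \<in> E})"

text \<open>A strategy of Alice maps the history of Bob's previous choices
a_0 ... a_(j-1) to the set A_j.\<close>

definition alice_wins :: "(nat \<Rightarrow> 'a::finite) set \<Rightarrow> (nat \<Rightarrow> nat) \<Rightarrow> bool" where
  "alice_wins X \<alpha> \<longleftrightarrow> (\<exists>\<sigma> :: 'a list \<Rightarrow> 'a set.
      (\<forall>w. card (\<sigma> w) = \<alpha> (length w) + 1) \<and>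
      (\<forall>a :: nat \<Rightarrow> 'a. (\<forall>j. a j \<in> \<sigma> (map a [0..<j])) \<longrightarrow> a \<in> X))"

definition winning_shift :: "(nat \<Rightarrow> 'a::finite) set \<Rightarrow> (nat \<Rightarrow> nat) set" where
  "winning_shift X = {\<alpha>. (\<forall>j. \<alpha> j < card (UNIV :: 'a set)) \<and> alice_wins X \<alpha>}"

definition regular_lang :: "'b list set \<Rightarrow> bool" where
  "regular_lang L \<longleftrightarrow> (\<exists>(Q :: nat set) q0 (\<delta> :: nat \<Rightarrow> 'b \<Rightarrow> nat) F.
      finite Q \<and> q0 \<in> Q \<and> (\<forall>q\<in>Q. \<forall>b. \<delta> q b \<in> Q) \<and> F \<subseteq> Q \<and>
      L = {w. foldl \<delta> q0 w \<in> F})"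

text \<open>Representation of a d-tuple of naturals in the ANS with language 0^*:
rep(n) = 0^n, components left-padded with the new symbol # to the common
length max n_i. A letter is a column, a list of length d of symbols, where
True encodes the symbol 0 and False encodes #.\<close>

definition rep_tuple :: "nat list \<Rightarrow> bool list list" where
  "rep_tuple t = (let m = foldr max t 0 in
      map (\<lambda>i. map (\<lambda>n. m - n \<le> i) t) [0..<m])"

definition one_recognizable :: "nat \<Rightarrow> nat list set \<Rightarrow> bool" where
  "one_recognizable d Y \<longleftrightarrow> Y \<subseteq> {t. length t = d} \<and> regular_lang (rep_tuple ` Y)"

text \<open>Sum of y is at most k (covers the case of an infinite sum).\<close>

definition seq_sum_le :: "(nat \<Rightarrow> nat) \<Rightarrow> nat \<Rightarrow> bool" where
  "seq_sum_le y k \<longleftrightarrow> (\<forall>N. (\<Sum>j<N. y j) \<le> k)"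

definition nu :: "(nat \<Rightarrow> nat) \<Rightarrow> nat list" where
  "nu y = (THE t. sorted t \<and> (\<forall>j. count_list t j = y j))"

definition nu_set :: "(nat \<Rightarrow> nat) set \<Rightarrow> nat \<Rightarrow> nat list set" where
  "nu_set Y k = {nu y | y. y \<in> Y \<and> seq_sum_le y k}"

definition weakly_1_codable :: "(nat \<Rightarrow> nat) set \<Rightarrow> bool" where
  "weakly_1_codable Y \<longleftrightarrow>
     (\<forall>k d. one_recognizable d {t \<in> nu_set Y k. length t = d})"

definition has_finite_coding_dim :: "(nat \<Rightarrow> nat) set \<Rightarrow> bool" where
  "has_finite_coding_dim Y \<longleftrightarrow> (\<exists>d. \<forall>y\<in>Y. seq_sum_le y d)"

definition one_codable :: "(nat \<Rightarrow> nat) set \<Rightarrow> bool" where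
  "one_codable Y \<longleftrightarrow> weakly_1_codable Y \<and> has_finite_coding_dim Y"

end

(*
  Present X by a finite graph and consider the subset construction: after Bob's moves w the game
  only depends on the set of live states reachable by reading w, and by Koenig's lemma Alice wins
  iff she can keep that set nonempty forever. Backward induction over the rounds therefore decides
  the game by iterating a "controllable predecessor" operator on families of sets of states.

  For a finitely supported alpha, encoded by the unary tuple nu(alpha) = (n_1, ..., n_d), the
  column weights of rep(nu(alpha)) increase by alpha(m), ..., alpha(0) where m = max n_i, so a
  finite automaton reading the columns can carry out the backward induction: W(X) is weakly
  1-codable.

  If some winning alpha has total weight larger than |A| times the number of families, two nonzero
  rounds p < q see the same family. Repeating the rounds p, ..., q-1 forever gives a winning choice
  sequence with infinitely many nonzero entries, and then Bob's binary choices in those rounds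
  produce uncountably many plays in X.
*)
theory Submission
  imports Defs "HOL-Library.Multiset"
begin

lemma sorted_eq_if_count_list_eq:
  assumes "sorted t" "sorted t'" "\<And>j. count_list t j = count_list t' j"
  shows "t = t'"
proof -
  have "mset t = mset t'" using assms(3) by (simp add: multiset_eq_iff count_mset)
  then have "sort t' = t" using properties_for_sort[of t t'] assms(1) by simp
  then show ?thesis using assms(2) by (simp add: sorted_sort_id)
qed

lemma nu_count_list: "sorted t \<Longrightarrow> nu (count_list t) = t"
  unfolding nu_def by (rule the_equality) (auto intro: sorted_eq_if_count_list_eq)

lemma sum_count_list_lessThan:
  "(\<Sum>j<N. count_list t j) = length (filter (\<lambda>x. x < N) (t :: nat list))"
proof (induction t)
  case (Cons a t)
  have "count_list (a # t) j = of_bool (a = j) + count_list t j" for j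
    by simp
  then have "(\<Sum>j<N. count_list (a # t) j) = (\<Sum>j<N. of_bool (a = j)) + (\<Sum>j<N. count_list t j)"
    by (simp only: sum.distrib)
  also have "(\<Sum>j<N. of_bool (a = j) :: nat) = of_bool (a < N)"
    by (induction N) auto
  finally show ?case using Cons by simp
qed simp

lemma seq_sum_le_count_list_iff: "seq_sum_le (count_list t) k \<longleftrightarrow> length t \<le> k"
proof
  assume "seq_sum_le (count_list t) k"
  then have "(\<Sum>j<Suc (sum_list t). count_list t j) \<le> k" unfolding seq_sum_le_def by blast
  moreover have "filter (\<lambda>x. x < Suc (sum_list t)) t = t"
    by (auto simp: filter_id_conv less_Suc_eq_le member_le_sum_list)
  ultimately show "length t \<le> k" by (metis sum_count_list_lessThan)
next
  assume "length t \<le> k"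
  then show "seq_sum_le (count_list t) k"
    unfolding seq_sum_le_def by (metis sum_count_list_lessThan length_filter_le order_trans)
qed

lemma seq_sum_le_imp_finite_support:
  assumes "seq_sum_le y k"
  shows "finite {j. 0 < y j}"
proof (rule ccontr)
  assume "infinite {j. 0 < y j}"
  then obtain B where B: "B \<subseteq> {j. 0 < y j}" "finite B" "card B = Suc k"
    using infinite_arbitrarily_large by blast
  obtain N where N: "\<forall>j\<in>B. j < N"
    using B(2) finite_nat_iff_bounded by auto
  have "card B = (\<Sum>j\<in>B. 1::nat)" by simp
  also have "\<dots> \<le> (\<Sum>j\<in>B. y j)" using B(1) by (intro sum_mono) auto
  also have "\<dots> \<le> (\<Sum>j<N. y j)" using N by (intro sum_mono2) auto
  also have "\<dots> \<le> k" using assms unfolding seq_sum_le_def by blast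
  finally show False using B(3) by simp
qed

lemma nu_set_length_eq:
  "{t \<in> nu_set Y k. length t = d} = {t. sorted t \<and> length t = d \<and> d \<le> k \<and> count_list t \<in> Y}"
proof (intro set_eqI iffI)
  fix t assume "t \<in> {t \<in> nu_set Y k. length t = d}"
  then obtain y where y: "t = nu y" "y \<in> Y" "seq_sum_le y k" "length t = d"
    unfolding nu_set_def by blast
  define t' where "t' = sorted_list_of_multiset (Abs_multiset y)"
  have "count_list t' = y"
    using seq_sum_le_imp_finite_support[OF y(3)]
    by (simp add: t'_def fun_eq_iff flip: count_mset)
  moreover have "sorted t'" by (simp add: t'_def)
  ultimately have "t = t'" using y(1) nu_count_list by blast
  then show "t \<in> {t. sorted t \<and> length t = d \<and> d \<le> k \<and> count_list t \<in> Y}"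
    using \<open>count_list t' = y\<close> \<open>sorted t'\<close> y seq_sum_le_count_list_iff[of t k] by auto
next
  fix t assume "t \<in> {t. sorted t \<and> length t = d \<and> d \<le> k \<and> count_list t \<in> Y}"
  then have t: "sorted t" "length t = d" "d \<le> k" "count_list t \<in> Y" by auto
  have "nu (count_list t) = t" using t(1) by (rule nu_count_list)
  moreover have "seq_sum_le (count_list t) k" using t seq_sum_le_count_list_iff by simp
  ultimately show "t \<in> {t \<in> nu_set Y k. length t = d}"
    unfolding nu_set_def using t by force
qed

lemma regular_lang_foldl:
  fixes \<delta> :: "'s \<Rightarrow> 'b \<Rightarrow> 's"
  assumes "finite Q" "q0 \<in> Q" "\<And>q b. q \<in> Q \<Longrightarrow> \<delta> q b \<in> Q"
  shows "regular_lang {w. P (foldl \<delta> q0 w)}"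
proof -
  obtain f :: "'s \<Rightarrow> nat" where inj: "inj_on f Q"
    using finite_imp_inj_to_nat_seg[OF assms(1)] by blast
  define \<delta>' where "\<delta>' i b = f (\<delta> (inv_into Q f i) b)" for i b
  have foldl_in: "foldl \<delta> q w \<in> Q" if "q \<in> Q" for q w
    using that by (induction w arbitrary: q) (auto simp: assms(3))
  have foldl_transfer: "foldl \<delta>' (f q) w = f (foldl \<delta> q w)" if "q \<in> Q" for q w
    using that by (induction w arbitrary: q) (simp_all add: \<delta>'_def inj assms(3))
  have "{w. P (foldl \<delta> q0 w)} = {w. foldl \<delta>' (f q0) w \<in> f ` {q\<in>Q. P q}}"
    using foldl_transfer[OF assms(2)] foldl_in[OF assms(2)] inj
    by (auto simp: inj_on_image_mem_iff)
  moreover have "\<forall>q\<in>f ` Q. \<forall>b. \<delta>' q b \<in> f ` Q"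
    using assms(3) by (auto simp: \<delta>'_def inv_into_into)
  ultimately show ?thesis
    unfolding regular_lang_def using assms(1,2)
    by (intro exI[of _ "f ` Q"] exI[of _ "f q0"] exI[of _ \<delta>'] exI[of _ "f ` {q\<in>Q. P q}"]) auto
qed

lemma regular_lang_empty: "regular_lang {}"
  unfolding regular_lang_def by (rule exI[of _ "{0}"]) auto

lemma foldr_max_le: "(\<forall>x\<in>set t. x \<le> m) \<Longrightarrow> foldr max t (0::nat) \<le> m"
  by (induction t) auto

lemma member_le_foldr_max: "x \<in> set t \<Longrightarrow> x \<le> foldr max t (0::nat)"
  by (induction t) auto

lemma foldr_max_in_set: "foldr max t (0::nat) = 0 \<or> foldr max t 0 \<in> set t"
  by (induction t) (auto simp: max_def)

lemma count_list_beyond_foldr_max: "foldr max t 0 < p \<Longrightarrow> count_list t (p::nat) = 0"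
  by (meson count_notin member_le_foldr_max leD)

lemma count_list_add_length_filter:
  "count_list t p + length (filter (\<lambda>n. Suc p \<le> n) t) = length (filter (\<lambda>n. p \<le> (n::nat)) t)"
  by (induction t) auto

lemma length_rep_tuple: "length (rep_tuple t) = foldr max t 0"
  by (simp add: rep_tuple_def Let_def)

lemma nth_rep_tuple:
  "i < foldr max t 0 \<Longrightarrow> rep_tuple t ! i = map (\<lambda>n. foldr max t 0 - n \<le> i) t"
  by (simp add: rep_tuple_def Let_def)

lemma up_closed_eq_atLeastLessThan:
  assumes "S \<subseteq> {..<(m::nat)}" "\<And>i j. i \<in> S \<Longrightarrow> i \<le> j \<Longrightarrow> j < m \<Longrightarrow> j \<in> S"
  shows "S = {m - card S..<m}"
proof (cases "S = {}")
  case False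
  have "finite S" using assms(1) finite_subset by blast
  define a where "a = Min S"
  have min_in: "a \<in> S" using \<open>finite S\<close> False unfolding a_def by (rule Min_in)
  have min_le: "a \<le> x" if "x \<in> S" for x using \<open>finite S\<close> that unfolding a_def by (rule Min_le)
  have "S = {a..<m}"
  proof
    show "S \<subseteq> {a..<m}" using min_le assms(1) by auto
    show "{a..<m} \<subseteq> S" using assms(2)[OF min_in] by auto
  qed
  moreover have "a < m" using min_in assms(1) by auto
  ultimately show ?thesis by simp
qed simp

definition ones :: "bool list \<Rightarrow> nat" where
  "ones r = length (filter id r)"

definition unary_columns :: "nat \<Rightarrow> bool list list \<Rightarrow> bool" where
  "unary_columns d w \<longleftrightarrow> (\<forall>r\<in>set w. length r = d \<and> sorted r) \<and>
     successively (list_all2 (\<le>)) w \<and> (w \<noteq> [] \<longrightarrow> True \<in> set (hd w))"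

fun column_ok :: "nat \<Rightarrow> bool list option \<Rightarrow> bool list \<Rightarrow> bool" where
  "column_ok d None r \<longleftrightarrow> length r = d \<and> sorted r \<and> True \<in> set r"
| "column_ok d (Some r') r \<longleftrightarrow> length r = d \<and> sorted r \<and> list_all2 (\<le>) r' r"

lemma unary_columns_snoc:
  "unary_columns d (w @ [r]) \<longleftrightarrow>
     unary_columns d w \<and> column_ok d (if w = [] then None else Some (last w)) r"
  by (cases "w = []") (auto simp: unary_columns_def successively_append_iff)

lemma unary_columns_mono:
  assumes "unary_columns d w" "w ! i ! c" "i \<le> j" "j < length w" "c < d"
  shows "w ! j ! c"
  using assms(3,4)
proof (induction j rule: dec_induct)
  case (step j)
  have "list_all2 (\<le>) (w ! j) (w ! Suc j)"
    using assms(1) step.prems by (auto simp: unary_columns_def intro: successively_nth)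
  moreover have "length (w ! j) = d" using assms(1) step.prems by (simp add: unary_columns_def)
  ultimately show ?case using step assms(5) by (auto dest: list_all2_nthD)
qed (use assms(2) in simp)

definition column_count :: "bool list list \<Rightarrow> nat \<Rightarrow> nat" where
  "column_count w c = card {i. i < length w \<and> w ! i ! c}"

lemma column_count_le: "column_count w c \<le> length w"
  unfolding column_count_def
  using card_mono[of "{..<length w}" "{i. i < length w \<and> w ! i ! c}"] by auto

lemma unary_columns_nth_iff:
  assumes "unary_columns d w" "i < length w" "c < d"
  shows "w ! i ! c \<longleftrightarrow> length w - column_count w c \<le> i"
proof -
  have "{i. i < length w \<and> w ! i ! c} = {length w - column_count w c..<length w}"
    unfolding column_count_def
    by (rule up_closed_eq_atLeastLessThan) (auto intro: unary_columns_mono[OF assms(1) _ _ _ assms(3)])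
  from eqset_imp_iff[OF this, of i] show ?thesis using assms(2) by simp
qed

lemma unary_columns_imp_rep_tuple:
  assumes "unary_columns d w"
  shows "\<exists>t. sorted t \<and> length t = d \<and> w = rep_tuple t"
proof -
  define m where "m = length w"
  define t where "t = map (column_count w) [0..<d]"
  have length_t: "length t = d" by (simp add: t_def)
  have rows: "length (w ! i) = d" "sorted (w ! i)" if "i < m" for i
    using assms that unfolding unary_columns_def m_def by auto
  have entry: "w ! i ! c \<longleftrightarrow> m - t ! c \<le> i" if "i < m" "c < d" for i c
    using unary_columns_nth_iff[OF assms] that by (simp add: t_def m_def)
  have t_le: "\<forall>x\<in>set t. x \<le> m" by (auto simp: t_def m_def column_count_le)
  have max_t: "foldr max t 0 = m"
  proof (cases "m = 0")
    case False
    then have "True \<in> set (w ! 0)" using assms unfolding unary_columns_def m_def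
      by (simp add: hd_conv_nth)
    then obtain c where c: "c < d" "w ! 0 ! c" using rows[of 0] False by (auto simp: in_set_conv_nth)
    then have "m \<le> t ! c" using entry[of 0 c] False by simp
    moreover have "t ! c \<in> set t" using c(1) length_t by simp
    ultimately have "m \<in> set t" using t_le by (metis antisym)
    then show ?thesis using foldr_max_le[OF t_le] member_le_foldr_max by (simp add: antisym)
  qed (use foldr_max_le[OF t_le] in simp)
  have "sorted t"
  proof (rule sorted_iff_nth_mono[THEN iffD2], intro allI impI)
    fix c c' assume cc: "c \<le> c'" "c' < length t"
    then have "c < d" "c' < d" by (auto simp: length_t)
    have "{i. i < length w \<and> w ! i ! c} \<subseteq> {i. i < length w \<and> w ! i ! c'}"
      using sorted_nth_mono[OF rows(2) cc(1)] rows(1) \<open>c' < d\<close> by (force simp: m_def)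
    then show "t ! c \<le> t ! c'"
      using \<open>c < d\<close> \<open>c' < d\<close> by (simp add: t_def column_count_def card_mono)
  qed
  moreover have "w = rep_tuple t"
  proof (rule nth_equalityI)
    show "length w = length (rep_tuple t)" by (simp add: length_rep_tuple max_t m_def)
    fix i assume "i < length w"
    then have i: "i < m" by (simp add: m_def)
    show "w ! i = rep_tuple t ! i"
      using rows(1)[OF i] entry[OF i] i by (simp add: list_eq_iff_nth_eq nth_rep_tuple max_t length_t)
  qed
  ultimately show ?thesis using length_t by blast
qed

lemma unary_columns_rep_tuple:
  assumes "sorted t"
  shows "unary_columns (length t) (rep_tuple t)"
proof -
  define m where "m = foldr max t 0"
  have rep: "rep_tuple t = map (\<lambda>i. map (\<lambda>n. m - n \<le> i) t) [0..<m]"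
    by (simp add: rep_tuple_def Let_def m_def)
  have "sorted (map (\<lambda>n. m - n \<le> i) t)" for i
  proof (rule sorted_iff_nth_mono[THEN iffD2], intro allI impI)
    fix c c' assume c: "c \<le> c'" "c' < length (map (\<lambda>n. m - n \<le> i) t)"
    then have "m - t ! c' \<le> m - t ! c" using sorted_nth_mono[OF assms] by (simp add: diff_le_mono2)
    then show "map (\<lambda>n. m - n \<le> i) t ! c \<le> map (\<lambda>n. m - n \<le> i) t ! c'"
      using c by (auto simp: le_bool_def)
  qed
  moreover have "True \<in> set (map (\<lambda>n. m - n \<le> 0) t)" if "0 < m"
    using foldr_max_in_set[of t] that m_def by force
  ultimately show ?thesis
    unfolding unary_columns_def rep
    by (auto simp: successively_conv_nth list_all2_conv_all_nth hd_map le_bool_def)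
qed

lemma ones_nth_rep_tuple:
  assumes "i < foldr max t 0"
  shows "ones (rep_tuple t ! i) = length (filter (\<lambda>n. foldr max t 0 - i \<le> n) t)"
proof -
  have "(\<lambda>n. foldr max t 0 - n \<le> i) = (\<lambda>n. foldr max t 0 - i \<le> n)"
    using assms by auto
  then show ?thesis
    using assms by (simp add: ones_def nth_rep_tuple filter_map comp_def)
qed

lemma finite_downclosed_pigeonhole:
  fixes P :: "'b \<Rightarrow> nat \<Rightarrow> bool"
  assumes "finite V" "\<And>k. \<exists>q\<in>V. P q k" "\<And>q k k'. P q k \<Longrightarrow> k' \<le> k \<Longrightarrow> P q k'"
  shows "\<exists>q\<in>V. \<forall>k. P q k"
proof (rule ccontr)
  assume "\<not> (\<exists>q\<in>V. \<forall>k. P q k)"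
  then obtain K :: "_ \<Rightarrow> nat" where K: "\<forall>q\<in>V. \<not> P q (K q)" by metis
  obtain q where q: "q \<in> V" "P q (Max (K ` V))" using assms(2) by blast
  have "K q \<le> Max (K ` V)" using assms(1) q(1) by simp
  then show False using assms(3)[OF q(2)] K q(1) by blast
qed

lemma ex_less_eq_image_if_card_less:
  fixes f :: "nat \<Rightarrow> 'b"
  assumes "finite B" "f ` A \<subseteq> B" "card B < card A"
  shows "\<exists>p\<in>A. \<exists>q. p < q \<and> f p = f q"
proof -
  have "\<not> inj_on f A" using card_inj_on_le[OF _ assms(2,1)] assms(3) by fastforce
  then obtain p q where "p \<in> A" "q \<in> A" "p \<noteq> q" "f p = f q" unfolding inj_on_def by blast
  then show ?thesis by (metis nat_neq_iff)
qed

lemma sum_le_card_nonzero_mult: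
  fixes \<alpha> :: "nat \<Rightarrow> nat"
  assumes "\<And>j. \<alpha> j < A"
  shows "(\<Sum>j<N. \<alpha> j) \<le> card {j. j < N \<and> \<alpha> j \<noteq> 0} * A"
proof -
  have "(\<Sum>j<N. \<alpha> j) = (\<Sum>j\<in>{j. j < N \<and> \<alpha> j \<noteq> 0}. \<alpha> j)"
    by (rule sum.mono_neutral_right) auto
  also have "\<dots> \<le> (\<Sum>j\<in>{j. j < N \<and> \<alpha> j \<noteq> 0}. A)"
    using assms by (intro sum_mono) (simp add: less_imp_le)
  finally show ?thesis by simp
qed

primrec history :: "(nat \<Rightarrow> 'a list \<Rightarrow> 'a) \<Rightarrow> nat \<Rightarrow> 'a list" where
  "history ch 0 = []"
| "history ch (Suc n) = history ch n @ [ch n (history ch n)]"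

definition play :: "(nat \<Rightarrow> 'a list \<Rightarrow> 'a) \<Rightarrow> nat \<Rightarrow> 'a" where
  "play ch n = ch n (history ch n)"

lemma map_play_upt: "map (play ch) [0..<n] = history ch n"
  by (induction n) (simp_all add: play_def)

lemma length_history: "length (history ch n) = n"
  by (induction n) auto

lemma consistent_play_extends:
  fixes \<sigma> :: "'a list \<Rightarrow> 'a set"
  assumes "\<And>v. \<sigma> v \<noteq> {}" "\<forall>i<length w. w ! i \<in> \<sigma> (take i w)"
  obtains a where "\<forall>j. a j \<in> \<sigma> (map a [0..<j])" "map a [0..<length w] = w"
proof -
  define ch where "ch n v = (if n < length w then w ! n else SOME b. b \<in> \<sigma> v)" for n v
  have history_eq: "n \<le> length w \<Longrightarrow> history ch n = take n w" for n
    by (induction n) (auto simp: ch_def take_Suc_conv_app_nth)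
  have "play ch j \<in> \<sigma> (map (play ch) [0..<j])" for j
  proof (cases "j < length w")
    case True
    then show ?thesis using assms(2) history_eq[of j] by (simp add: map_play_upt play_def ch_def)
  next
    case False
    then show ?thesis using assms(1) by (simp add: map_play_upt play_def ch_def some_in_eq)
  qed
  moreover have "map (play ch) [0..<length w] = w"
    using history_eq[of "length w"] by (simp add: map_play_upt)
  ultimately show ?thesis using that by blast
qed

lemma alice_wins_less_card:
  fixes X :: "(nat \<Rightarrow> 'a::finite) set"
  assumes "alice_wins X \<alpha>"
  shows "\<alpha> p < card (UNIV :: 'a set)"
proof -
  obtain \<sigma> :: "'a list \<Rightarrow> 'a set" where "\<forall>w. card (\<sigma> w) = \<alpha> (length w) + 1"
    using assms unfolding alice_wins_def by blast
  moreover have "card (\<sigma> (replicate p undefined)) \<le> card (UNIV :: 'a set)"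
    by (intro card_mono) auto
  ultimately show ?thesis by (metis Suc_eq_plus1 Suc_le_lessD length_replicate)
qed

lemma alice_wins_mono:
  assumes "alice_wins X \<alpha>" "\<And>p. \<beta> p \<le> \<alpha> p"
  shows "alice_wins X \<beta>"
proof -
  obtain \<sigma> where card: "\<forall>w. card (\<sigma> w) = \<alpha> (length w) + 1"
    and win: "\<forall>a. (\<forall>j. a j \<in> \<sigma> (map a [0..<j])) \<longrightarrow> a \<in> X"
    using assms unfolding alice_wins_def by blast
  have "\<exists>C. C \<subseteq> \<sigma> w \<and> card C = \<beta> (length w) + 1" for w
    using obtain_subset_with_card_n[of "\<beta> (length w) + 1" "\<sigma> w"] card assms(2) by force
  then obtain \<sigma>' where "\<And>w. \<sigma>' w \<subseteq> \<sigma> w \<and> card (\<sigma>' w) = \<beta> (length w) + 1" by metis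
  then show ?thesis unfolding alice_wins_def using win by blast
qed

lemma uncountable_Pow_infinite:
  assumes "infinite P"
  shows "uncountable (Pow P)"
proof
  assume "countable (Pow P)"
  then obtain f :: "nat \<Rightarrow> _" where f: "range f = Pow P"
    using range_from_nat_into[of "Pow P"] by blast
  obtain g :: "nat \<Rightarrow> _" where g: "inj g" "range g \<subseteq> P"
    using infinite_countable_subset[OF assms] by blast
  define D where "D = {g n | n. g n \<notin> f n}"
  have "D \<in> Pow P" using g(2) by (auto simp: D_def)
  then obtain n where "f n = D" using f by (metis imageE)
  then show False using g(1) unfolding D_def by (auto dest: injD)
qed

lemma inj_on_play_select:
  fixes f0 f1 :: "'a list \<Rightarrow> 'a"
  defines "ch \<equiv> \<lambda>B n v. if (n :: nat) \<in> B then f1 v else f0 v"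
  assumes "\<And>v. length v \<in> P \<Longrightarrow> f1 v \<noteq> f0 v"
  shows "inj_on (\<lambda>B. play (ch B)) (Pow P)"
proof
  fix B B' assume B: "B \<in> Pow P" "B' \<in> Pow P" and eq: "play (ch B) = play (ch B')"
  show "B = B'"
  proof (rule ccontr)
    assume "B \<noteq> B'"
    then have ex: "\<exists>j. (j \<in> B) \<noteq> (j \<in> B')" by blast
    define j where "j = (LEAST j. (j \<in> B) \<noteq> (j \<in> B'))"
    have j: "(j \<in> B) \<noteq> (j \<in> B')" unfolding j_def by (rule LeastI_ex[OF ex])
    have "n < j \<Longrightarrow> (n \<in> B) = (n \<in> B')" for n unfolding j_def using not_less_Least by blast
    then have "n \<le> j \<Longrightarrow> history (ch B) n = history (ch B') n" for n
      by (induction n) (auto simp: ch_def)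
    moreover have "j \<in> P" using j B by auto
    then have "f1 (history (ch B) j) \<noteq> f0 (history (ch B) j)"
      using assms(2) length_history by metis
    ultimately have "play (ch B) j \<noteq> play (ch B') j" using j by (auto simp: play_def ch_def)
    then show False using eq by simp
  qed
qed

lemma alice_wins_infinitely_often_imp_uncountable:
  fixes X :: "(nat \<Rightarrow> 'a::finite) set"
  assumes "alice_wins X \<beta>" "infinite {j. \<beta> j \<noteq> 0}"
  shows "uncountable X"
proof
  assume "countable X"
  obtain \<sigma> where card: "\<forall>w. card (\<sigma> w) = \<beta> (length w) + 1"
    and win: "\<forall>a. (\<forall>j. a j \<in> \<sigma> (map a [0..<j])) \<longrightarrow> a \<in> X"
    using assms unfolding alice_wins_def by blast
  define P where "P = {j. \<beta> j \<noteq> 0}"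
  define e0 where "e0 C = (SOME a. a \<in> C)" for C :: "'a set"
  define e1 where "e1 C = (SOME a. a \<in> C \<and> a \<noteq> e0 C)" for C :: "'a set"
  have e0_mem: "e0 (\<sigma> w) \<in> \<sigma> w" for w
    using card[rule_format, of w] by (auto simp: e0_def some_in_eq)
  have e1_mem: "e1 (\<sigma> w) \<in> \<sigma> w \<and> e1 (\<sigma> w) \<noteq> e0 (\<sigma> w)" if "length w \<in> P" for w
  proof -
    have "\<not> \<sigma> w \<subseteq> {e0 (\<sigma> w)}"
      using card[rule_format, of w] that card_mono[of "{e0 (\<sigma> w)}" "\<sigma> w"] by (auto simp: P_def)
    then show ?thesis unfolding e1_def by (metis (mono_tags, lifting) singletonI subsetI someI)
  qed
  define ch where "ch = (\<lambda>B n v. if (n :: nat) \<in> B then e1 (\<sigma> v) else e0 (\<sigma> v))"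
  have "play (ch B) \<in> X" if "B \<subseteq> P" for B
  proof -
    have "play (ch B) j \<in> \<sigma> (map (play (ch B)) [0..<j])" for j
      using e0_mem e1_mem[of "history (ch B) j"] that length_history[of "ch B" j]
      by (auto simp: play_def ch_def map_play_upt)
    then show ?thesis using win by blast
  qed
  then have "(\<lambda>B. play (ch B)) ` Pow P \<subseteq> X" by blast
  moreover have "inj_on (\<lambda>B. play (ch B)) (Pow P)"
    unfolding ch_def using e1_mem by (intro inj_on_play_select) blast
  ultimately have "countable (Pow P)"
    using \<open>countable X\<close> countable_subset countable_image_inj_on by blast
  then show False using uncountable_Pow_infinite assms(2) P_def by blast
qed

definition loop_index :: "nat \<Rightarrow> nat \<Rightarrow> nat \<Rightarrow> nat" where
  "loop_index p q j = (if j < q then j else p + (j - p) mod (q - p))"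

lemma loop_index_0: "0 < q \<Longrightarrow> loop_index p q 0 = 0"
  by (simp add: loop_index_def)

lemma loop_index_Suc:
  assumes "p < q"
  shows "loop_index p q (Suc j) =
    (if Suc (loop_index p q j) = q then p else Suc (loop_index p q j))"
proof (cases "q \<le> j")
  case True
  then have "Suc j - p = Suc (j - p)" using assms by simp
  then show ?thesis using True assms by (auto simp: loop_index_def mod_Suc)
qed (use assms in \<open>auto simp: loop_index_def\<close>)

lemma infinite_loop_index_eq_start:
  assumes "p < q"
  shows "infinite {j. loop_index p q j = p}"
  unfolding infinite_nat_iff_unbounded_le
proof
  fix m
  have "q + m * (q - p) - p = Suc m * (q - p)" using assms by (simp add: algebra_simps)
  then have "loop_index p q (q + m * (q - p)) = p" by (simp add: loop_index_def)
  moreover have "m \<le> m * (q - p)" using assms by (simp add: Suc_le_eq)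
  then have "m \<le> q + m * (q - p)" by (simp add: trans_le_add2)
  ultimately show "\<exists>j\<ge>m. j \<in> {j. loop_index p q j = p}" by blast
qed

section \<open>The game on a presented sofic shift\<close>

locale sofic_graph =
  fixes E :: "(nat \<times> 'a::finite \<times> nat) set"
  assumes finite_edges: "finite E"
begin

definition shift :: "(nat \<Rightarrow> 'a) set" where
  "shift = {x. \<exists>p::nat \<Rightarrow> nat. \<forall>i. (p i, x i, p (Suc i)) \<in> E}"

definition live :: "nat \<Rightarrow> bool" where
  "live q \<longleftrightarrow> (\<exists>(p::nat \<Rightarrow> nat) x. p 0 = q \<and> (\<forall>i. (p i, x i, p (Suc i)) \<in> E))"

definition live_states :: "nat set" where
  "live_states = {q. live q}"

definition reach :: "'a list \<Rightarrow> nat set" where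
  "reach w = {q. live q \<and> (\<exists>p::nat \<Rightarrow> nat. p (length w) = q \<and>
      (\<forall>i<length w. (p i, w ! i, p (Suc i)) \<in> E))}"

definition succs :: "nat set \<Rightarrow> 'a \<Rightarrow> nat set" where
  "succs S a = {q'. live q' \<and> (\<exists>q\<in>S. (q, a, q') \<in> E)}"

definition nonempty_live_sets :: "nat set set" where
  "nonempty_live_sets = {S. S \<subseteq> live_states \<and> S \<noteq> {}}"

text \<open>Controllable predecessor: the sets from which Alice, offering n + 1 letters, forces the
  successor set into W.\<close>

definition cpre :: "nat \<Rightarrow> nat set set \<Rightarrow> nat set set" where
  "cpre n W = {S. S \<subseteq> live_states \<and> S \<noteq> {} \<and> n + 1 \<le> card {a. succs S a \<in> W}}"

text \<open>For \<alpha> vanishing beyond m, win_sets \<alpha> m j is the family of reachable sets from which Alice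
  wins the game starting at round m + 1 - j.\<close>

fun win_sets :: "(nat \<Rightarrow> nat) \<Rightarrow> nat \<Rightarrow> nat \<Rightarrow> nat set set" where
  "win_sets \<alpha> m 0 = nonempty_live_sets"
| "win_sets \<alpha> m (Suc j) = cpre (\<alpha> (m - j)) (win_sets \<alpha> m j)"

lemma finite_live_states: "finite live_states"
proof -
  have "live_states \<subseteq> fst ` E"
    unfolding live_states_def live_def by (force intro: rev_image_eqI)
  then show ?thesis using finite_edges finite_subset by blast
qed

lemma live_if_edge_to_live:
  assumes "live q'" "(q, a, q') \<in> E"
  shows "live q"
proof -
  obtain p x where p: "p 0 = q'" "\<forall>i. (p i, x i, p (Suc i)) \<in> E"
    using assms(1) unfolding live_def by blast
  have "\<forall>i. (case_nat q p i, case_nat a x i, case_nat q p (Suc i)) \<in> E"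
    using p assms(2) by (auto split: nat.split)
  then show ?thesis
    unfolding live_def by (intro exI[of _ "case_nat q p"] exI[of _ "case_nat a x"]) simp
qed

lemma live_imp_edge_to_live:
  assumes "live q"
  shows "\<exists>a q'. (q, a, q') \<in> E \<and> live q'"
proof -
  obtain p x where p: "p 0 = q" "\<forall>i. (p i, x i, p (Suc i)) \<in> E"
    using assms unfolding live_def by blast
  have "live (p 1)" unfolding live_def
    using p(2) by (intro exI[of _ "\<lambda>i. p (Suc i)"] exI[of _ "\<lambda>i. x (Suc i)"]) simp
  then show ?thesis using p by (metis One_nat_def)
qed

lemma reach_Nil: "reach [] = live_states"
  unfolding reach_def live_states_def by auto

lemma reach_snoc: "reach (w @ [a]) = succs (reach w) a"
proof (intro set_eqI iffI)
  fix q' assume "q' \<in> reach (w @ [a])"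
  then obtain p where p: "live q'" "p (Suc (length w)) = q'"
    "\<forall>i<Suc (length w). (p i, (w @ [a]) ! i, p (Suc i)) \<in> E"
    unfolding reach_def by auto
  have e: "(p (length w), a, q') \<in> E" using p(2,3) by (metis lessI nth_append_length)
  moreover have "\<forall>i<length w. (p i, w ! i, p (Suc i)) \<in> E"
    using p(3) by (metis less_SucI nth_append)
  ultimately have "p (length w) \<in> reach w"
    unfolding reach_def using live_if_edge_to_live[OF p(1)] by blast
  then show "q' \<in> succs (reach w) a" unfolding succs_def using p(1) e by blast
next
  fix q' assume "q' \<in> succs (reach w) a"
  then obtain q where q: "live q'" "q \<in> reach w" "(q, a, q') \<in> E" unfolding succs_def by blast
  then obtain p where p: "p (length w) = q" "\<forall>i<length w. (p i, w ! i, p (Suc i)) \<in> E"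
    unfolding reach_def by blast
  define p' where "p' = p(Suc (length w) := q')"
  have "\<forall>i<Suc (length w). (p' i, (w @ [a]) ! i, p' (Suc i)) \<in> E"
    using p q(3) by (auto simp: p'_def nth_append less_Suc_eq)
  then show "q' \<in> reach (w @ [a])" unfolding reach_def using q(1)
    by (intro CollectI conjI exI[of _ p']) (auto simp: p'_def)
qed

lemma reach_subset: "reach w \<subseteq> live_states"
  unfolding reach_def live_states_def by blast

lemma succs_empty: "succs {} a = {}"
  unfolding succs_def by blast

lemma cpre_subset: "cpre n W \<subseteq> Pow live_states"
  unfolding cpre_def by blast

lemma win_sets_subset: "win_sets \<alpha> m j \<subseteq> Pow live_states"
  by (cases j) (auto simp: nonempty_live_sets_def cpre_subset)

lemma cpre_0_nonempty_live_sets: "cpre 0 nonempty_live_sets = nonempty_live_sets"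
proof (intro set_eqI iffI)
  fix S assume S: "S \<in> nonempty_live_sets"
  then obtain q where "q \<in> S" "live q" unfolding nonempty_live_sets_def live_states_def by blast
  then obtain a q' where "(q, a, q') \<in> E" "live q'" using live_imp_edge_to_live by blast
  then have "succs S a \<in> nonempty_live_sets"
    using \<open>q \<in> S\<close> unfolding succs_def nonempty_live_sets_def live_states_def by blast
  then have "{a. succs S a \<in> nonempty_live_sets} \<noteq> {}" by blast
  then show "S \<in> cpre 0 nonempty_live_sets"
    using S unfolding cpre_def nonempty_live_sets_def by (simp add: Suc_le_eq card_gt_0_iff)
qed (simp add: cpre_def nonempty_live_sets_def)

lemma reach_nonempty_if_in_shift:
  assumes "x \<in> shift"
  shows "reach (map x [0..<n]) \<noteq> {}"
proof -
  obtain p where p: "\<forall>i. (p i, x i, p (Suc i)) \<in> E" using assms unfolding shift_def by blast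
  have "live (p n)" unfolding live_def
    using p by (intro exI[of _ "\<lambda>i. p (n + i)"] exI[of _ "\<lambda>i. x (n + i)"]) simp
  then have "p n \<in> reach (map x [0..<n])" unfolding reach_def using p by auto
  then show ?thesis by blast
qed

definition reads :: "(nat \<Rightarrow> 'a) \<Rightarrow> nat \<Rightarrow> nat \<Rightarrow> nat \<Rightarrow> bool" where
  "reads x q n k \<longleftrightarrow> (\<exists>p::nat \<Rightarrow> nat. p 0 = q \<and> (\<forall>i<k. (p i, x (n + i), p (Suc i)) \<in> E))"

lemma reads_mono: "reads x q n k \<Longrightarrow> k' \<le> k \<Longrightarrow> reads x q n k'"
  unfolding reads_def by fastforce

lemma reads_forever_step:
  assumes "\<forall>k. reads x q n k"
  shows "\<exists>q'. (q, x n, q') \<in> E \<and> (\<forall>k. reads x q' (Suc n) k)"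
proof -
  have "\<exists>q'\<in>snd ` snd ` E. (q, x n, q') \<in> E \<and> reads x q' (Suc n) k" for k
  proof -
    obtain p where p: "p 0 = q" "\<forall>i<Suc k. (p i, x (n + i), p (Suc i)) \<in> E"
      using assms unfolding reads_def by blast
    then have e: "(q, x n, p 1) \<in> E" by (metis One_nat_def add_0_right zero_less_Suc)
    have "reads x (p 1) (Suc n) k" unfolding reads_def
      using p(2) by (intro exI[of _ "\<lambda>i. p (Suc i)"]) auto
    moreover have "p 1 \<in> snd ` snd ` E" using e by force
    ultimately show ?thesis using e by blast
  qed
  then show ?thesis
    using finite_downclosed_pigeonhole[of "snd ` snd ` E"
        "\<lambda>q' k. (q, x n, q') \<in> E \<and> reads x q' (Suc n) k"] finite_edges reads_mono by blast
qed

text \<open>Koenig's lemma for the finitely branching tree of finite paths labelled by prefixes of x.\<close>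

lemma in_shift_if_reach_nonempty:
  assumes "\<And>n. reach (map x [0..<n]) \<noteq> {}"
  shows "x \<in> shift"
proof -
  have "\<exists>q\<in>fst ` E. reads x q 0 (Suc k)" for k
  proof -
    obtain p where p: "\<forall>i<Suc k. (p i, map x [0..<Suc k] ! i, p (Suc i)) \<in> E"
      using assms[of "Suc k"] unfolding reach_def by auto
    then have "\<forall>i<Suc k. (p i, x (0 + i), p (Suc i)) \<in> E"
      by (simp del: upt_Suc)
    then show ?thesis unfolding reads_def by (metis fst_conv rev_image_eqI zero_less_Suc)
  qed
  then obtain q0 where "\<forall>k. reads x q0 0 (Suc k)"
    using finite_downclosed_pigeonhole[of "fst ` E" "\<lambda>q k. reads x q 0 (Suc k)"]
      finite_edges reads_mono by force
  then have q0: "\<forall>k. reads x q0 0 k" using reads_mono by (meson le_SucI order_refl)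
  define next_state where
    "next_state i q = (SOME q'. (q, x i, q') \<in> E \<and> (\<forall>k. reads x q' (Suc i) k))" for i q
  define path where "path = rec_nat q0 next_state"
  have path_reads: "\<forall>k. reads x (path i) i k" for i
  proof (induction i)
    case (Suc i)
    then show ?case using someI_ex[OF reads_forever_step[OF Suc]] by (simp add: path_def next_state_def)
  qed (simp add: path_def q0)
  have "(path i, x i, path (Suc i)) \<in> E" for i
    using someI_ex[OF reads_forever_step[OF path_reads[of i]]] by (simp add: path_def next_state_def)
  then show ?thesis unfolding shift_def by blast
qed

lemma live_states_in_win_sets_if_alice_wins:
  assumes "alice_wins shift \<alpha>"
  shows "live_states \<in> win_sets \<alpha> m (Suc m)"
proof -
  obtain \<sigma> where card: "\<forall>w. card (\<sigma> w) = \<alpha> (length w) + 1"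
    and win: "\<forall>a. (\<forall>j. a j \<in> \<sigma> (map a [0..<j])) \<longrightarrow> a \<in> shift"
    using assms unfolding alice_wins_def by blast
  have ne: "\<sigma> w \<noteq> {}" for w using card[rule_format, of w] by auto
  have "reach w \<in> win_sets \<alpha> m j"
    if "length w + j = Suc m" "\<forall>i<length w. w ! i \<in> \<sigma> (take i w)" for j w
    using that
  proof (induction j arbitrary: w)
    case 0
    then obtain a where "\<forall>j. a j \<in> \<sigma> (map a [0..<j])" "map a [0..<length w] = w"
      using consistent_play_extends[of \<sigma> w] ne by blast
    then have "reach w \<noteq> {}" using win reach_nonempty_if_in_shift by metis
    then show ?case using reach_subset by (simp add: nonempty_live_sets_def)
  next
    case (Suc j)
    have good: "\<sigma> w \<subseteq> {a. succs (reach w) a \<in> win_sets \<alpha> m j}"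
    proof
      fix a assume "a \<in> \<sigma> w"
      then have "\<forall>i<length (w @ [a]). (w @ [a]) ! i \<in> \<sigma> (take i (w @ [a]))"
        using Suc.prems(2) by (auto simp: nth_append less_Suc_eq)
      then have "reach (w @ [a]) \<in> win_sets \<alpha> m j" using Suc.IH Suc.prems(1) by simp
      then show "a \<in> {a. succs (reach w) a \<in> win_sets \<alpha> m j}" by (simp add: reach_snoc)
    qed
    then have "card (\<sigma> w) \<le> card {a. succs (reach w) a \<in> win_sets \<alpha> m j}"
      by (intro card_mono) auto
    moreover have "length w = m - j" using Suc.prems(1) by simp
    moreover obtain a where "succs (reach w) a \<in> win_sets \<alpha> m j" using good ne by blast
    then have "reach w \<noteq> {}"
      using succs_empty win_sets_subset by (cases j) (auto simp: nonempty_live_sets_def cpre_def)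
    ultimately show ?case using card reach_subset by (simp add: cpre_def)
  qed
  from this[of "[]" "Suc m"] show ?thesis by (simp add: reach_Nil)
qed

lemma alice_wins_if_cpre_chain:
  assumes chain: "\<And>p. W p \<subseteq> cpre (\<alpha> p) (W (Suc p))" and start: "live_states \<in> W 0"
  shows "alice_wins shift \<alpha>"
proof -
  have W_ne: "W p \<noteq> {}" for p
  proof (induction p)
    case (Suc p)
    then obtain S where "S \<in> cpre (\<alpha> p) (W (Suc p))" using chain by blast
    then show ?case unfolding cpre_def by fastforce
  qed (use start in blast)
  have bound: "\<alpha> p + 1 \<le> card (UNIV :: 'a set)" for p
  proof -
    obtain S where "S \<in> cpre (\<alpha> p) (W (Suc p))" using chain W_ne by blast
    then have "\<alpha> p + 1 \<le> card {a. succs S a \<in> W (Suc p)}" unfolding cpre_def by blast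
    also have "\<dots> \<le> card (UNIV :: 'a set)" by (intro card_mono) auto
    finally show ?thesis .
  qed
  define good where "good w = {a. succs (reach w) a \<in> W (Suc (length w))}" for w
  have "\<exists>C. card C = \<alpha> (length w) + 1 \<and> (reach w \<in> W (length w) \<longrightarrow> C \<subseteq> good w)" for w
  proof (cases "reach w \<in> W (length w)")
    case True
    then have "\<alpha> (length w) + 1 \<le> card (good w)"
      using chain unfolding cpre_def good_def by blast
    then show ?thesis using obtain_subset_with_card_n by metis
  next
    case False
    \<comment> \<open>such histories never occur in plays following the strategy\<close>
    then show ?thesis using obtain_subset_with_card_n[OF bound] by metis
  qed
  then obtain \<sigma> where \<sigma>: "\<And>w. card (\<sigma> w) = \<alpha> (length w) + 1"
    "\<And>w. reach w \<in> W (length w) \<Longrightarrow> \<sigma> w \<subseteq> good w"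
    by metis
  have "a \<in> shift" if a: "\<forall>j. a j \<in> \<sigma> (map a [0..<j])" for a
  proof -
    have reach_in: "reach (map a [0..<n]) \<in> W n" for n
    proof (induction n)
      case (Suc n)
      then have "a n \<in> good (map a [0..<n])" using \<sigma>(2)[of "map a [0..<n]"] a by auto
      then show ?case by (simp add: good_def reach_snoc)
    qed (use start in \<open>simp add: reach_Nil\<close>)
    show ?thesis
      using in_shift_if_reach_nonempty reach_in chain unfolding cpre_def by blast
  qed
  then show ?thesis unfolding alice_wins_def using \<sigma>(1) by blast
qed

lemma win_sets_chain:
  assumes "\<forall>p>m. \<alpha> p = 0"
  shows "win_sets \<alpha> m (Suc m - p) = cpre (\<alpha> p) (win_sets \<alpha> m (Suc m - Suc p))"
proof (cases "p \<le> m")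
  case True
  then have "Suc m - p = Suc (m - p)" "m - (m - p) = p" "Suc m - Suc p = m - p" by auto
  then show ?thesis by simp
qed (use assms cpre_0_nonempty_live_sets in simp)

lemma alice_wins_iff_win_sets:
  assumes "\<forall>p>m. \<alpha> p = 0"
  shows "alice_wins shift \<alpha> \<longleftrightarrow> live_states \<in> win_sets \<alpha> m (Suc m)"
  using alice_wins_if_cpre_chain[of "\<lambda>p. win_sets \<alpha> m (Suc m - p)" \<alpha>] win_sets_chain[OF assms]
    live_states_in_win_sets_if_alice_wins
  by auto

subsection \<open>An automaton reading the unary codes of winning sequences\<close>

text \<open>States: the previous column (if any), its number of ones, and the current family of sets.
  If t is sorted with maximum m, column i of rep_tuple t has ones at the entries \<ge> m - i, so the
  increments of the numbers of ones are count_list t (m - i): the automaton performs the backward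
  induction of win_sets.\<close>

fun dfa_step :: "nat \<Rightarrow> (bool list option \<times> nat \<times> nat set set) option \<Rightarrow> bool list \<Rightarrow>
    (bool list option \<times> nat \<times> nat set set) option" where
  "dfa_step d None r = None"
| "dfa_step d (Some (prev, k, W)) r =
     (if column_ok d prev r then Some (Some r, ones r, cpre (ones r - k) W) else None)"

fun dfa_final :: "nat \<Rightarrow> (bool list option \<times> nat \<times> nat set set) option \<Rightarrow> bool" where
  "dfa_final d None = False"
| "dfa_final d (Some (prev, k, W)) = (live_states \<in> cpre (d - k) W)"

definition dfa_init :: "(bool list option \<times> nat \<times> nat set set) option" where
  "dfa_init = Some (None, 0, nonempty_live_sets)"

definition backward_step :: "nat \<times> nat set set \<Rightarrow> bool list \<Rightarrow> nat \<times> nat set set" where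
  "backward_step kW r = (ones r, cpre (ones r - fst kW) (snd kW))"

lemma foldl_dfa_step:
  "foldl (dfa_step d) dfa_init w =
    (if unary_columns d w
     then Some (if w = [] then None else Some (last w), foldl backward_step (0, nonempty_live_sets) w)
     else None)"
proof (induction w rule: rev_induct)
  case (snoc r w)
  obtain k W where kW: "foldl backward_step (0, nonempty_live_sets) w = (k, W)" by fastforce
  then have "foldl backward_step (0, nonempty_live_sets) (w @ [r]) = (ones r, cpre (ones r - k) W)"
    by (simp add: backward_step_def)
  then show ?case
    using snoc kW unary_columns_snoc[of d w r] by (cases "w = []") auto
qed (simp add: unary_columns_def dfa_init_def)

lemma regular_dfa_language: "regular_lang {w. dfa_final d (foldl (dfa_step d) dfa_init w)}"
proof (rule regular_lang_foldl)
  define S :: "(bool list option \<times> nat \<times> nat set set) set" where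
    "S = insert None (Some ` {r. length r = d}) \<times> {..d} \<times> Pow (Pow live_states)"
  define Q where "Q = insert None (Some ` S)"
  have "finite {r :: bool list. length r = d}"
    using finite_lists_length_eq[of "UNIV :: bool set" d] by simp
  then show "finite Q" unfolding Q_def S_def using finite_live_states by simp
  show "dfa_init \<in> Q" unfolding Q_def S_def dfa_init_def nonempty_live_sets_def by auto
  show "dfa_step d q r \<in> Q" if "q \<in> Q" for q r
  proof (cases q)
    case (Some s)
    obtain prev k W where s: "s = (prev, k, W)" by (cases s)
    show ?thesis
    proof (cases "column_ok d prev r")
      case True
      then have "length r = d" by (cases prev) auto
      then have "Some r \<in> insert None (Some ` {r. length r = d})" by blast
      moreover have "ones r \<in> {..d}"
        using length_filter_le[of id r] \<open>length r = d\<close> by (simp add: ones_def)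
      moreover have "cpre (ones r - k) W \<in> Pow (Pow live_states)" using cpre_subset by blast
      ultimately have "(Some r, ones r, cpre (ones r - k) W) \<in> S" unfolding S_def by blast
      moreover have "dfa_step d q r = Some (Some r, ones r, cpre (ones r - k) W)"
        using True by (simp add: Some s)
      ultimately show ?thesis unfolding Q_def by blast
    next
      case False
      then have "dfa_step d q r = None" by (simp add: Some s)
      then show ?thesis unfolding Q_def by blast
    qed
  qed (simp add: Q_def)
qed

lemma foldl_backward_step_rep_tuple:
  assumes "foldr max t 0 = m" "i \<le> m"
  shows "foldl backward_step (0, nonempty_live_sets) (take i (rep_tuple t)) =
    (length (filter (\<lambda>n. Suc m - i \<le> n) t), win_sets (count_list t) m i)"
  using assms(2)
proof (induction i)
  case 0
  have "filter (\<lambda>n. Suc m \<le> n) t = []"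
    by (rule filter_False) (use member_le_foldr_max assms(1) in fastforce)
  then show ?case by simp
next
  case (Suc i)
  then have i: "i < m" by simp
  then have "take (Suc i) (rep_tuple t) = take i (rep_tuple t) @ [rep_tuple t ! i]"
    by (simp add: take_Suc_conv_app_nth length_rep_tuple assms(1))
  moreover have "ones (rep_tuple t ! i) = length (filter (\<lambda>n. m - i \<le> n) t)"
    using ones_nth_rep_tuple[of i t] i assms(1) by simp
  moreover have "length (filter (\<lambda>n. m - i \<le> n) t) - length (filter (\<lambda>n. Suc m - i \<le> n) t) =
      count_list t (m - i)"
    using count_list_add_length_filter[of t "m - i"] i by (simp add: Suc_diff_le)
  ultimately show ?case
    using Suc by (simp add: backward_step_def)
qed

lemma dfa_accepts_rep_tuple_iff:
  assumes "sorted t"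
  shows "dfa_final (length t) (foldl (dfa_step (length t)) dfa_init (rep_tuple t)) \<longleftrightarrow>
    alice_wins shift (count_list t)"
proof -
  define m where "m = foldr max t 0"
  have "foldl backward_step (0, nonempty_live_sets) (rep_tuple t) =
      (length (filter (\<lambda>n. 1 \<le> n) t), win_sets (count_list t) m m)"
    using foldl_backward_step_rep_tuple[of t m m] by (simp add: m_def length_rep_tuple)
  moreover have "count_list t 0 = length t - length (filter (\<lambda>n. 1 \<le> n) t)"
    using count_list_add_length_filter[of t 0] by simp
  ultimately have "dfa_final (length t) (foldl (dfa_step (length t)) dfa_init (rep_tuple t)) \<longleftrightarrow>
      live_states \<in> win_sets (count_list t) m (Suc m)"
    using foldl_dfa_step[of "length t" "rep_tuple t"] unary_columns_rep_tuple[OF assms] by simp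
  also have "\<dots> \<longleftrightarrow> alice_wins shift (count_list t)"
    by (rule alice_wins_iff_win_sets[symmetric]) (simp add: m_def count_list_beyond_foldr_max)
  finally show ?thesis .
qed

lemma rep_tuple_winning_eq_dfa_language:
  "rep_tuple ` {t. sorted t \<and> length t = d \<and> alice_wins shift (count_list t)} =
   {w. dfa_final d (foldl (dfa_step d) dfa_init w)}"
proof (intro set_eqI iffI)
  fix w assume accepted: "w \<in> {w. dfa_final d (foldl (dfa_step d) dfa_init w)}"
  then have "unary_columns d w" using foldl_dfa_step[of d w] by (auto split: if_splits)
  then obtain t where t: "sorted t" "length t = d" "w = rep_tuple t"
    using unary_columns_imp_rep_tuple by blast
  then have "alice_wins shift (count_list t)"
    using accepted dfa_accepts_rep_tuple_iff[OF t(1)] by simp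
  then show "w \<in> rep_tuple ` {t. sorted t \<and> length t = d \<and> alice_wins shift (count_list t)}"
    using t by blast
next
  fix w assume "w \<in> rep_tuple ` {t. sorted t \<and> length t = d \<and> alice_wins shift (count_list t)}"
  then obtain t where "sorted t" "length t = d" "alice_wins shift (count_list t)" "w = rep_tuple t"
    by blast
  then show "w \<in> {w. dfa_final d (foldl (dfa_step d) dfa_init w)}"
    using dfa_accepts_rep_tuple_iff[of t] by simp
qed

subsection \<open>Countable sofic shifts\<close>

lemma alice_wins_loop:
  assumes chain: "\<And>j. W j \<subseteq> cpre (\<alpha> j) (W (Suc j))" and start: "live_states \<in> W 0"
    and "p < q" "W p = W q"
  shows "alice_wins shift (\<alpha> \<circ> loop_index p q)"
proof (rule alice_wins_if_cpre_chain)
  fix j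
  have "W (Suc (loop_index p q j)) = W (loop_index p q (Suc j))"
    using loop_index_Suc[OF \<open>p < q\<close>] \<open>W p = W q\<close> by simp
  then show "(W \<circ> loop_index p q) j \<subseteq> cpre ((\<alpha> \<circ> loop_index p q) j) ((W \<circ> loop_index p q) (Suc j))"
    using chain[of "loop_index p q j"] by simp
qed (use start loop_index_0 \<open>p < q\<close> in simp)

lemma countable_shift_imp_bounded_wins:
  assumes "countable shift"
  shows "\<exists>D. \<forall>\<alpha>. alice_wins shift \<alpha> \<longrightarrow> seq_sum_le \<alpha> D"
proof (rule ccontr)
  define A where "A = card (UNIV :: 'a set)"
  define K where "K = card (Pow (Pow live_states))"
  assume "\<not> (\<exists>D. \<forall>\<alpha>. alice_wins shift \<alpha> \<longrightarrow> seq_sum_le \<alpha> D)"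
  then obtain \<alpha> where wins: "alice_wins shift \<alpha>" and "\<not> seq_sum_le \<alpha> (A * K)"
    by (meson not_ex)
  then obtain N where large: "A * K < (\<Sum>j<N. \<alpha> j)"
    unfolding seq_sum_le_def by (auto simp: not_le)
  define nz where "nz = {j. j < N \<and> \<alpha> j \<noteq> 0}"
  have "(\<Sum>j<N. \<alpha> j) \<le> card nz * A"
    unfolding nz_def A_def by (rule sum_le_card_nonzero_mult) (rule alice_wins_less_card[OF wins])
  with large have "A * K < card nz * A" by linarith
  then have "K < card nz" by (simp add: mult.commute)
  define \<alpha>' where "\<alpha>' j = (if j < N then \<alpha> j else 0)" for j
  define W where "W p = win_sets \<alpha>' N (Suc N - p)" for p
  have chain: "W p \<subseteq> cpre (\<alpha>' p) (W (Suc p))" for p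
    unfolding W_def by (rule equalityD1[OF win_sets_chain]) (simp add: \<alpha>'_def)
  have "alice_wins shift \<alpha>'" by (rule alice_wins_mono[OF wins]) (simp add: \<alpha>'_def)
  then have start: "live_states \<in> W 0"
    using live_states_in_win_sets_if_alice_wins[of \<alpha>' N] by (simp add: W_def)
  have "W ` nz \<subseteq> Pow (Pow live_states)" unfolding W_def using win_sets_subset by blast
  moreover have "finite (Pow (Pow live_states))" using finite_live_states by simp
  ultimately obtain p q where "p \<in> nz" "p < q" "W p = W q"
    using ex_less_eq_image_if_card_less[of "Pow (Pow live_states)" W nz] \<open>K < card nz\<close>
    unfolding K_def by blast
  then have "alice_wins shift (\<alpha>' \<circ> loop_index p q)"
    using alice_wins_loop[OF chain start] by blast
  moreover have "{j. loop_index p q j = p} \<subseteq> {j. (\<alpha>' \<circ> loop_index p q) j \<noteq> 0}"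
    using \<open>p \<in> nz\<close> by (auto simp: nz_def \<alpha>'_def)
  then have "infinite {j. (\<alpha>' \<circ> loop_index p q) j \<noteq> 0}"
    using infinite_loop_index_eq_start[OF \<open>p < q\<close>] finite_subset by blast
  ultimately show False
    using alice_wins_infinitely_often_imp_uncountable assms by blast
qed

end

theorem mainTheorem15:
  fixes X :: "(nat \<Rightarrow> 'a::finite) set"
  assumes "sofic X"
  shows "weakly_1_codable (winning_shift X) \<and>
         (countable X \<longrightarrow> one_codable (winning_shift X))"
proof -
  obtain E :: "(nat \<times> 'a \<times> nat) set" where "finite E"
    and X: "X = {x. \<exists>p :: nat \<Rightarrow> nat. \<forall>i. (p i, x i, p (Suc i)) \<in> E}"
    using assms unfolding sofic_def by blast
  interpret sofic_graph E by unfold_locales fact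
  have X_eq: "X = shift" using X by (simp add: shift_def)
  have W_eq: "winning_shift X = {\<alpha>. alice_wins shift \<alpha>}"
    unfolding winning_shift_def X_eq using alice_wins_less_card by blast
  have weak: "weakly_1_codable (winning_shift X)"
    unfolding weakly_1_codable_def one_recognizable_def
  proof (intro allI conjI)
    fix k d
    show "{t \<in> nu_set (winning_shift X) k. length t = d} \<subseteq> {t. length t = d}" by blast
    have "rep_tuple ` {t \<in> nu_set (winning_shift X) k. length t = d} =
        (if d \<le> k then {w. dfa_final d (foldl (dfa_step d) dfa_init w)} else {})"
      unfolding nu_set_length_eq W_eq rep_tuple_winning_eq_dfa_language[symmetric] by auto
    then show "regular_lang (rep_tuple ` {t \<in> nu_set (winning_shift X) k. length t = d})"
      by (simp add: regular_dfa_language regular_lang_empty)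
  qed
  moreover have "has_finite_coding_dim (winning_shift X)" if "countable X"
    using countable_shift_imp_bounded_wins[OF that[unfolded X_eq]]
    unfolding has_finite_coding_dim_def W_eq by blast
  ultimately show ?thesis unfolding one_codable_def by blast
qed

end
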